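(* Let $t>0$ and $k\in\mathbb{N}$. For all $(y_1,\dots,y_{k+1})\in\mathbb{R}^{k+1}$, $$-\sum_{j=1}^k\mathbf{H}_t(y_{j+1}-y_j)\leq-\sum_{j=1}^k\mathbf{H}_t^{j,k+1}(y_{k+1}-y_j).$$
   Context: $\mathbf{H}_t(x)=e^{t^{1/3}x}$, and for integers $1\leq j<n$, $\mathbf{H}_t^{j,n}(x)=(n-1)^{-1}e^{t^{1/3}x/(n-j)}$. *)

theory Defs
  imports Complex_Main
begin

definition H :: "real \<Rightarrow> real \<Rightarrow> real" where
  "H t x = exp (t powr (1/3) * x)"

definition Hjn :: "real \<Rightarrow> nat \<Rightarrow> nat \<Rightarrow> real \<Rightarrow> real" where
  "Hjn t j n x = exp (t powr (1/3) * x / real (n - j)) / real (n - 1)"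

end

theory Submission
  imports Defs
begin

text \<open>With \<open>c = t powr (1/3)\<close>, the difference \<open>y (k+1) - y j\<close> telescopes into the
  \<open>k + 1 - j\<close> increments \<open>y (i+1) - y i\<close>, \<open>j \<le> i \<le> k\<close>, so the exponent of the
  \<open>j\<close>-th term on the right is \<open>c\<close> times their mean. Its exponential is at most that of the
  largest scaled increment, hence at most the sum \<open>S\<close> of the positive terms \<open>H t (y (i+1) - y i)\<close>; so each of
  the \<open>k\<close> right-hand terms is at most \<open>S / k\<close>.\<close>

lemma ex_ge_mean:
  fixes a :: "'a \<Rightarrow> 'b::linordered_field"
  assumes "finite A" and "A \<noteq> {}"
  shows "\<exists>m\<in>A. sum a A / of_nat (card A) \<le> a m"
proof -
  have "Max (a ` A) \<in> a ` A"
    using assms by simp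
  then obtain m where m: "m \<in> A" and max: "a m = Max (a ` A)"
    by force
  have "sum a A \<le> of_nat (card A) * a m"
    by (rule sum_bounded_above) (simp add: max assms)
  moreover have "card A > 0"
    using assms by (simp add: card_gt_0_iff)
  ultimately show ?thesis
    using m by (auto simp: divide_le_eq mult.commute)
qed

lemma exp_mean_le_sum_exp:
  fixes a :: "'a \<Rightarrow> real"
  assumes "finite A" and "A \<noteq> {}"
  shows "exp (sum a A / card A) \<le> (\<Sum>i\<in>A. exp (a i))"
proof -
  obtain m where m: "m \<in> A" and "sum a A / card A \<le> a m"
    using ex_ge_mean[OF assms] by blast
  then have "exp (sum a A / card A) \<le> exp (a m)"
    by simp
  also have "\<dots> \<le> (\<Sum>i\<in>A. exp (a i))"
    using m assms(1) by (intro member_le_sum) auto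
  finally show ?thesis .
qed

lemma exp_mean_increment_le_sum_exp:
  fixes y :: "nat \<Rightarrow> real"
  assumes "j \<le> k"
  shows "exp (c * (y (Suc k) - y j) / real (Suc k - j)) \<le> (\<Sum>i=j..k. exp (c * (y (Suc i) - y i)))"
proof -
  have "c * (y (Suc k) - y j) = (\<Sum>i=j..k. c * (y (Suc i) - y i))"
    using assms by (simp add: sum_distrib_left[symmetric] sum_Suc_diff)
  then show ?thesis
    using exp_mean_le_sum_exp[of "{j..k}" "\<lambda>i. c * (y (Suc i) - y i)"] assms by simp
qed

theorem mainTheorem11:
  fixes t :: real and k :: nat and y :: "nat \<Rightarrow> real"
  assumes "t > 0"
  shows "- (\<Sum>j=1..k. H t (y (j+1) - y j)) \<le> - (\<Sum>j=1..k. Hjn t j (k+1) (y (k+1) - y j))"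
proof -
  define S where "S = (\<Sum>j=1..k. H t (y (j+1) - y j))"
  have term_le: "Hjn t j (k+1) (y (k+1) - y j) \<le> S / k" if j: "j \<in> {1..k}" for j
  proof -
    have "Hjn t j (k+1) (y (k+1) - y j) \<le> (\<Sum>i=j..k. H t (y (i+1) - y i)) / k"
      using exp_mean_increment_le_sum_exp[of j k "t powr (1/3)" y] j
      by (simp add: Hjn_def H_def divide_right_mono)
    also have "\<dots> \<le> S / k"
      unfolding S_def using j by (intro divide_right_mono sum_mono2) (auto simp: H_def)
    finally show ?thesis .
  qed
  have "(\<Sum>j=1..k. Hjn t j (k+1) (y (k+1) - y j)) \<le> (\<Sum>j=1..k. S / k)"
    by (rule sum_mono) (rule term_le)
  also have "\<dots> \<le> S"
    by (cases "k = 0") (simp_all add: S_def)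
  finally show ?thesis
    unfolding S_def by simp
qed

end
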